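(* For any $a\in(0,1)$ and any $x\in(\frac12,1]$, there exists $\boldsymbol{\mu}=(\mu_1,\mu_2)\in\Lambda$ such that (i) $\mu_1>\mu_2$ and $\mu_1+\mu_2\ge 1$, (ii) $\lambda(x,\boldsymbol{\mu})=a$, and (iii) $x^\star(\boldsymbol{\mu})<\left(\frac12+x\right)/2$.
   Context: Two-armed bandit with Bernoulli rewards; an instance is $\boldsymbol{\mu}=(\mu_1,\mu_2)$, the means of the two arms, and $\Lambda=\{\boldsymbol{\mu}\in(0,1)^2:\mu_1\neq\mu_2\}$. For $p,q\in(0,1)$ let $d(p,q)=p\log\frac{p}{q}+(1-p)\log\frac{1-p}{1-q}$ be the Bernoulli Kullback–Leibler divergence. For $x\in[0,1]$ define $g(x,\boldsymbol{\mu})=\inf_{\lambda\in(0,1)}\big[(1-x)d(\lambda,\mu_1)+x\,d(\lambda,\mu_2)\big]$; equivalently $g(x,\boldsymbol{\mu})=-\log\big((1-\mu_1)^{1-x}(1-\mu_2)^x+\mu_1^{1-x}\mu_2^x\big)$. Let $\lambda(x,\boldsymbol{\mu})$ be the minimizer $\lambda$ in this infimum, and $x^\star(\boldsymbol{\mu})=\arg\max_{x\in(0,1)}g(x,\boldsymbol{\mu})$. *)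

theory Defs
  imports "HOL-Analysis.Analysis"
begin

definition kl :: "real \<Rightarrow> real \<Rightarrow> real" where
  "kl p q = p * ln (p / q) + (1 - p) * ln ((1 - p) / (1 - q))"

definition Lambda :: "(real \<times> real) set" where
  "Lambda = {mu. 0 < fst mu \<and> fst mu < 1 \<and> 0 < snd mu \<and> snd mu < 1 \<and> fst mu \<noteq> snd mu}"

definition gobj :: "real \<Rightarrow> real \<times> real \<Rightarrow> real \<Rightarrow> real" where
  "gobj x mu l = (1 - x) * kl l (fst mu) + x * kl l (snd mu)"

definition g :: "real \<Rightarrow> real \<times> real \<Rightarrow> real" where
  "g x mu = (INF l\<in>{0<..<1}. gobj x mu l)"

definition lam :: "real \<Rightarrow> real \<times> real \<Rightarrow> real" where
  "lam x mu = (THE l. l \<in> {0<..<1} \<and> (\<forall>l'\<in>{0<..<1}. gobj x mu l \<le> gobj x mu l'))"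

definition xstar :: "real \<times> real \<Rightarrow> real" where
  "xstar mu = (THE x. x \<in> {0<..<1} \<and> (\<forall>y\<in>{0<..<1}. g y mu \<le> g x mu))"

end

theory Submission
  imports Defs
begin

text \<open>
  Write \<open>\<mu> = (sigmoid u, sigmoid v)\<close>. Since
  \<open>kl l (sigmoid w) = l ln l + (1 - l) ln (1 - l) + softplus w - l w\<close>, the objective of the
  infimum defining \<open>g\<close> is \<open>kl l (sigmoid w)\<close> plus a constant, where \<open>w = (1 - y) u + y v\<close>.
  Hence \<open>\<lambda>(y, \<mu>) = sigmoid w\<close> and \<open>g(y, \<mu>)\<close> is the Jensen gap
  \<open>(1 - y) softplus u + y softplus v - softplus w\<close> of the strictly convex function softplus.
  So \<open>g\<close> is strictly concave in \<open>y\<close>, increasing at \<open>y = 0\<close>, and \<open>x\<^sup>\<star>(\<mu>) < c\<close> as soon as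
  its slope at \<open>c\<close> is negative: \<open>(u - v) sigmoid ((1 - c) u + c v) < softplus u - softplus v\<close>.

  The condition \<open>\<lambda>(x, \<mu>) = a\<close> means \<open>(1 - x) u + x v = L\<close> with \<open>L = logit a\<close>. For \<open>L < 0\<close> the
  symmetric choice \<open>v = -u\<close> works, because then the slope condition says
  \<open>sigmoid ((1 - 2c) u) < 1/2\<close>. For \<open>L \<ge> 0\<close> put \<open>u = L + x d\<close>, \<open>v = L - (1 - x) d\<close>: the slack in the
  slope condition vanishes to first order in \<open>d\<close> and has second derivative
  \<open>(2c - 1) sigmoid'(L) > 0\<close>, so a small \<open>d > 0\<close> works.
\<close>

definition sigmoid :: "real \<Rightarrow> real" where
  "sigmoid t = exp t / (1 + exp t)"

definition softplus :: "real \<Rightarrow> real" where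
  "softplus t = ln (1 + exp t)"

lemma one_plus_exp_pos: "0 < 1 + exp (t::real)"
  by (simp add: add_pos_pos)

lemma one_plus_exp_neq_zero [simp]: "1 + exp (t::real) \<noteq> 0"
  using one_plus_exp_pos[of t] by linarith

lemma sigmoid_pos: "0 < sigmoid t"
  and sigmoid_less_one: "sigmoid t < 1"
  by (simp_all add: sigmoid_def one_plus_exp_pos)

lemma sigmoid_zero: "sigmoid 0 = 1 / 2"
  by (simp add: sigmoid_def)

lemma one_minus_sigmoid: "1 - sigmoid t = 1 / (1 + exp t)"
  using one_plus_exp_pos[of t] by (simp add: sigmoid_def field_simps)

lemma sigmoid_minus: "sigmoid (- t) = 1 - sigmoid t"
  using one_plus_exp_pos[of t] by (simp add: one_minus_sigmoid sigmoid_def exp_minus field_simps)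

lemma ln_sigmoid: "ln (sigmoid t) = t - softplus t"
  by (simp add: sigmoid_def softplus_def ln_div one_plus_exp_pos)

lemma ln_one_minus_sigmoid: "ln (1 - sigmoid t) = - softplus t"
  by (simp add: one_minus_sigmoid softplus_def ln_div one_plus_exp_pos)

lemma sigmoid_logit:
  assumes "0 < p" "p < 1"
  shows "sigmoid (ln (p / (1 - p))) = p"
  using assms by (simp add: sigmoid_def field_simps)

lemma strict_mono_sigmoid: "strict_mono sigmoid"
proof (rule strict_monoI)
  fix s t :: real
  assume "s < t"
  then have "exp s * (1 + exp t) < exp t * (1 + exp s)" by (simp add: algebra_simps)
  then show "sigmoid s < sigmoid t"
    by (simp add: sigmoid_def divide_simps one_plus_exp_pos)
qed

lemma softplus_minus: "softplus t - softplus (- t) = t"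
proof -
  have "1 + exp t = exp t * (1 + exp (- t))" by (simp add: exp_minus field_simps)
  then show ?thesis by (simp add: softplus_def ln_mult one_plus_exp_pos)
qed

lemma has_real_derivative_softplus [derivative_intros]:
  "(f has_real_derivative f') (at t within S) \<Longrightarrow>
    ((\<lambda>t. softplus (f t)) has_real_derivative sigmoid (f t) * f') (at t within S)"
  unfolding softplus_def sigmoid_def
  by (auto intro!: derivative_eq_intros simp: one_plus_exp_pos add_pos_pos)

lemma has_real_derivative_sigmoid [derivative_intros]:
  "(f has_real_derivative f') (at t within S) \<Longrightarrow>
    ((\<lambda>t. sigmoid (f t)) has_real_derivative sigmoid (f t) * (1 - sigmoid (f t)) * f') (at t within S)"
  unfolding one_minus_sigmoid sigmoid_def
  using one_plus_exp_pos[of "f t"]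
  by (auto intro!: derivative_eq_intros simp: field_simps power2_eq_square)

lemma tangent_less_of_strict_mono_deriv:
  fixes f f' :: "real \<Rightarrow> real"
  assumes f': "\<And>t. (f has_real_derivative f' t) (at t)" and "strict_mono f'" and "y \<noteq> y0"
  shows "f y0 + (y - y0) * f' y0 < f y"
proof (cases "y0 < y")
  case True
  then obtain z where "y0 < z" "z < y" "f y - f y0 = (y - y0) * f' z"
    using MVT2[of y0 y f f'] f' by blast
  moreover have "(y - y0) * f' y0 < (y - y0) * f' z"
    using \<open>strict_mono f'\<close> \<open>y0 < z\<close> True by (simp add: strict_mono_less)
  ultimately show ?thesis by linarith
next
  case False
  then have "y < y0" using \<open>y \<noteq> y0\<close> by simp
  then obtain z where "y < z" "z < y0" "f y0 - f y = (y0 - y) * f' z"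
    using MVT2[of y y0 f f'] f' by blast
  moreover have "(y0 - y) * f' z < (y0 - y) * f' y0"
    using \<open>strict_mono f'\<close> \<open>z < y0\<close> \<open>y < y0\<close> by (simp add: strict_mono_less)
  ultimately show ?thesis by (simp add: algebra_simps)
qed

lemma softplus_tangent_less:
  assumes "w \<noteq> w0"
  shows "softplus w0 + (w - w0) * sigmoid w0 < softplus w"
  using tangent_less_of_strict_mono_deriv[OF _ strict_mono_sigmoid assms]
    has_real_derivative_softplus[OF DERIV_ident] by simp

lemma kl_sigmoid:
  assumes "0 < l" "l < 1"
  shows "kl l (sigmoid w) = l * ln l + (1 - l) * ln (1 - l) + softplus w - l * w"
  using assms sigmoid_pos[of w] sigmoid_less_one[of w]
  by (simp add: kl_def ln_div ln_sigmoid ln_one_minus_sigmoid algebra_simps)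

lemma kl_pos:
  assumes "0 < l" "l < 1" "0 < m" "m < 1" "l \<noteq> m"
  shows "0 < kl l m"
proof -
  define w0 where "w0 = ln (l / (1 - l))"
  define w where "w = ln (m / (1 - m))"
  have l: "sigmoid w0 = l" and m: "sigmoid w = m"
    using assms by (simp_all add: w0_def w_def sigmoid_logit)
  have "kl l (sigmoid w0) = 0" using l by (simp add: kl_def)
  then have "kl l m = softplus w - softplus w0 - l * (w - w0)"
    using kl_sigmoid[OF assms(1,2), of w] kl_sigmoid[OF assms(1,2), of w0] m
    by (simp add: algebra_simps)
  moreover have "w \<noteq> w0" using assms l m by auto
  ultimately show ?thesis using softplus_tangent_less[of w w0] l by (simp add: algebra_simps)
qed

lemma gobj_sigmoid:
  assumes "0 < l" "l < 1"
  shows "gobj y (sigmoid u, sigmoid v) l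
    = kl l (sigmoid ((1 - y) * u + y * v))
      + ((1 - y) * softplus u + y * softplus v - softplus ((1 - y) * u + y * v))"
  by (simp add: gobj_def kl_sigmoid[OF assms] algebra_simps)

lemma lam_sigmoid: "lam y (sigmoid u, sigmoid v) = sigmoid ((1 - y) * u + y * v)"
  unfolding lam_def
proof (rule the_equality)
  let ?G = "gobj y (sigmoid u, sigmoid v)" and ?m = "sigmoid ((1 - y) * u + y * v)"
  have m: "?m \<in> {0<..<1}" using sigmoid_pos sigmoid_less_one by simp
  have less: "?G ?m < ?G l" if "l \<in> {0<..<1}" "l \<noteq> ?m" for l
    using that m gobj_sigmoid kl_pos[of l ?m] by (simp add: kl_def)
  show "?m \<in> {0<..<1} \<and> (\<forall>l\<in>{0<..<1}. ?G ?m \<le> ?G l)"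
    using m less by (metis order.order_iff_strict)
  show "l = ?m" if "l \<in> {0<..<1} \<and> (\<forall>l'\<in>{0<..<1}. ?G l \<le> ?G l')" for l
    using that m less by force
qed

lemma g_sigmoid:
  "g y (sigmoid u, sigmoid v) = (1 - y) * softplus u + y * softplus v - softplus ((1 - y) * u + y * v)"
  unfolding g_def
proof (rule cInf_eq_minimum)
  let ?m = "sigmoid ((1 - y) * u + y * v)"
  have m: "?m \<in> {0<..<1}" using sigmoid_pos sigmoid_less_one by simp
  show "(1 - y) * softplus u + y * softplus v - softplus ((1 - y) * u + y * v)
      \<in> gobj y (sigmoid u, sigmoid v) ` {0<..<1}"
    using m gobj_sigmoid[of ?m] by (intro image_eqI[where x = ?m]) (simp_all add: kl_def)
  show "(1 - y) * softplus u + y * softplus v - softplus ((1 - y) * u + y * v) \<le> z"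
    if "z \<in> gobj y (sigmoid u, sigmoid v) ` {0<..<1}" for z
    using that m gobj_sigmoid kl_pos[of _ ?m] by (force simp: kl_def less_imp_le)
qed

lemma xstar_sigmoid_less:
  assumes "v < u" "c \<le> 1"
    and slope: "(u - v) * sigmoid ((1 - c) * u + c * v) < softplus u - softplus v"
  shows "xstar (sigmoid u, sigmoid v) < c"
proof -
  define h where "h y = (1 - y) * softplus u + y * softplus v - softplus ((1 - y) * u + y * v)" for y
  define h' where "h' y = softplus v - softplus u + (u - v) * sigmoid ((1 - y) * u + y * v)" for y
  have h_deriv: "((\<lambda>y. - h y) has_real_derivative - h' y) (at y)" for y
    unfolding h_def h'_def by (auto intro!: derivative_eq_intros simp: algebra_simps)
  have h'_decreasing: "strict_mono (\<lambda>y. - h' y)"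
  proof (rule strict_monoI)
    fix s t :: real
    assume "s < t"
    then have "0 < (t - s) * (u - v)"
      using \<open>v < u\<close> by simp
    then have "(1 - t) * u + t * v < (1 - s) * u + s * v"
      by (simp add: algebra_simps)
    then show "- h' s < - h' t"
      using \<open>v < u\<close> strict_mono_sigmoid by (simp add: h'_def strict_mono_less)
  qed
  have "0 < h' 0"
    using softplus_tangent_less[of v u] \<open>v < u\<close> by (simp add: h'_def algebra_simps)
  moreover have "h' c < 0"
    using slope by (simp add: h'_def)
  ultimately have "0 < c"
    using strict_mono_less_eq[OF h'_decreasing, of c 0] by (auto simp: not_less[symmetric])
  have "continuous_on {0..c} h'"
    unfolding h'_def sigmoid_def by (intro continuous_intros) (simp add: one_plus_exp_pos)
  then obtain y0 where "0 \<le> y0" "y0 \<le> c" "h' y0 = 0"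
    using IVT2'[of h' c 0 0] \<open>0 < h' 0\<close> \<open>h' c < 0\<close> \<open>0 < c\<close> by auto
  then have y0: "0 < y0" "y0 < c"
    using \<open>0 < h' 0\<close> \<open>h' c < 0\<close> by (auto simp: order.order_iff_strict)
  have max: "h y < h y0" if "y \<noteq> y0" for y
    using tangent_less_of_strict_mono_deriv[OF h_deriv h'_decreasing that] \<open>h' y0 = 0\<close> by simp
  have g_h: "g y (sigmoid u, sigmoid v) = h y" for y
    by (simp add: g_sigmoid h_def)
  have "xstar (sigmoid u, sigmoid v) = y0"
    unfolding xstar_def g_h
  proof (rule the_equality)
    show "y0 \<in> {0<..<1} \<and> (\<forall>y\<in>{0<..<1}. h y \<le> h y0)"
      using y0 \<open>c \<le> 1\<close> max by (metis greaterThanLessThan_iff less_eq_real_def less_le_trans)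
    show "y = y0" if "y \<in> {0<..<1} \<and> (\<forall>y'\<in>{0<..<1}. h y' \<le> h y)" for y
    proof (rule ccontr)
      assume "y \<noteq> y0"
      then have "h y < h y0" by (rule max)
      moreover have "h y0 \<le> h y" using that y0 \<open>c \<le> 1\<close> by auto
      ultimately show False by simp
    qed
  qed
  with y0 show ?thesis by simp
qed

lemma exists_pos_of_second_deriv_pos:
  fixes f f' :: "real \<Rightarrow> real"
  assumes f': "\<And>t. (f has_real_derivative f' t) (at t)"
    and f'': "(f' has_real_derivative D) (at 0)"
    and "f 0 = 0" "f' 0 = 0" "0 < D"
  shows "\<exists>d>0. 0 < f d"
proof -
  obtain e where "0 < e" and f'_pos: "\<And>h. 0 < h \<Longrightarrow> h < e \<Longrightarrow> 0 < f' h"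
    using DERIV_pos_inc_right[OF f'' \<open>0 < D\<close>] \<open>f' 0 = 0\<close> by auto
  then obtain z where "0 < z" "z < e / 2" "f (e / 2) - f 0 = (e / 2 - 0) * f' z"
    using MVT2[of 0 "e / 2" f f'] f' by auto
  moreover have "0 < e / 2 * f' z"
    using f'_pos[of z] \<open>0 < z\<close> \<open>z < e / 2\<close> by simp
  ultimately have "0 < f (e / 2)"
    using \<open>f 0 = 0\<close> by simp
  with \<open>0 < e\<close> show ?thesis by (intro exI[of _ "e / 2"]) simp
qed

lemma logit_pair_exists:
  assumes "1/2 < x" "1/2 < c"
  shows "\<exists>u v. v < u \<and> 0 \<le> u + v \<and> (1 - x) * u + x * v = L
    \<and> (u - v) * sigmoid ((1 - c) * u + c * v) < softplus u - softplus v"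
proof (cases "L < 0")
  case True
  define u where "u = L / (1 - 2 * x)"
  have "0 < u" using True assms by (simp add: u_def divide_neg_neg)
  have "(1 - x) * u + x * (- u) = (1 - 2 * x) * u" by (simp add: algebra_simps)
  also have "\<dots> = L" using assms by (simp add: u_def)
  finally have "(1 - x) * u + x * (- u) = L" .
  have "(1 - c) * u + c * (- u) < 0"
    using \<open>0 < u\<close> assms by (simp add: algebra_simps)
  then have "sigmoid ((1 - c) * u + c * (- u)) < 1 / 2"
    using strict_mono_less[OF strict_mono_sigmoid, of _ 0] by (simp add: sigmoid_zero)
  then have "(u - - u) * sigmoid ((1 - c) * u + c * (- u)) < softplus u - softplus (- u)"
    using \<open>0 < u\<close> by (simp add: softplus_minus)
  with \<open>0 < u\<close> \<open>(1 - x) * u + x * (- u) = L\<close> show ?thesis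
    by (intro exI[of _ u] exI[of _ "- u"]) simp
next
  case False
  define H where "H d = softplus (L + x * d) - softplus (L - (1 - x) * d)
    - d * sigmoid (L + (x - c) * d)" for d
  define H' where "H' d = x * sigmoid (L + x * d) + (1 - x) * sigmoid (L - (1 - x) * d)
    - sigmoid (L + (x - c) * d)
    - d * (x - c) * (sigmoid (L + (x - c) * d) * (1 - sigmoid (L + (x - c) * d)))" for d
  have "(H has_real_derivative H' d) (at d)" for d
    unfolding H_def H'_def by (auto intro!: derivative_eq_intros simp: algebra_simps)
  moreover have "(H' has_real_derivative (2 * c - 1) * (sigmoid L * (1 - sigmoid L))) (at 0)"
    unfolding H'_def by (rule derivative_eq_intros refl)+ (simp add: algebra_simps)
  moreover have "H 0 = 0" "H' 0 = 0"
    by (simp_all add: H_def H'_def algebra_simps)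
  moreover have "0 < (2 * c - 1) * (sigmoid L * (1 - sigmoid L))"
    using assms sigmoid_pos[of L] sigmoid_less_one[of L] by simp
  ultimately obtain d where "0 < d" "0 < H d"
    using exists_pos_of_second_deriv_pos by blast
  define u where "u = L + x * d"
  define v where "v = L - (1 - x) * d"
  have uv: "u - v = d" "u + v = 2 * L + (2 * x - 1) * d"
    "(1 - c) * u + c * v = L + (x - c) * d" "(1 - x) * u + x * v = L"
    by (simp_all add: u_def v_def algebra_simps)
  have "0 \<le> u + v"
    using uv(2) False \<open>0 < d\<close> assms by simp
  with uv \<open>0 < d\<close> \<open>0 < H d\<close> show ?thesis
    by (intro exI[of _ u] exI[of _ v]) (simp add: H_def u_def v_def)
qed

theorem mainTheorem1:
  fixes a x :: real
  assumes "0 < a" "a < 1" "1/2 < x" "x \<le> 1"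
  shows "\<exists>mu \<in> Lambda. (fst mu > snd mu \<and> fst mu + snd mu \<ge> 1)
           \<and> lam x mu = a
           \<and> xstar mu < (1/2 + x) / 2"
proof -
  define c where "c = (1/2 + x) / 2"
  have "1/2 < c" "c \<le> 1" using assms by (simp_all add: c_def)
  then obtain u v where "v < u" "0 \<le> u + v" and logit_a: "(1 - x) * u + x * v = ln (a / (1 - a))"
    and slope: "(u - v) * sigmoid ((1 - c) * u + c * v) < softplus u - softplus v"
    using logit_pair_exists[OF \<open>1/2 < x\<close>] by blast
  have "sigmoid v < sigmoid u"
    using \<open>v < u\<close> strict_mono_sigmoid by (simp add: strict_mono_less)
  moreover have "1 \<le> sigmoid u + sigmoid v"
    using \<open>0 \<le> u + v\<close> strict_mono_less_eq[OF strict_mono_sigmoid, of "- u" v]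
    by (simp add: sigmoid_minus)
  moreover have "lam x (sigmoid u, sigmoid v) = a"
    using assms by (simp add: lam_sigmoid logit_a sigmoid_logit)
  moreover have "xstar (sigmoid u, sigmoid v) < c"
    using xstar_sigmoid_less[OF \<open>v < u\<close> \<open>c \<le> 1\<close> slope] .
  moreover have "(sigmoid u, sigmoid v) \<in> Lambda"
    using \<open>sigmoid v < sigmoid u\<close> by (simp add: Lambda_def sigmoid_pos sigmoid_less_one)
  ultimately show ?thesis
    unfolding c_def by (intro bexI[of _ "(sigmoid u, sigmoid v)"]) simp_all
qed

end
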